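(* Let $p$ be a prime and $k,\ell,m$ integers with $k>0$ and $\ell,m\ge 0$; put $q=p^k$, $Q=p^{\ell}$, $R=p^m$. Let $c\in\mathbb{F}_{q^3}$ and define \[ f(X)=(X^q-X)^{Q+1}+c^{q^2}X^{q^2R}+c^{q}X^{qR}+cX^{R}, \] i.e. $f(X)=X^{Q+1}\circ(X^q-X)+(X^{q^2}+X^q+X)\circ cX^{R}$. Then $f(X)$ permutes $\mathbb{F}_{q^3}$ if and only if $\gcd(q-1,Q+1)=1$ and $\operatorname{Tr}_{\mathbb{F}_{q^3}/\mathbb{F}_q}(c)\ne 0$. Equivalently, $f(X)$ permutes $\mathbb{F}_{q^3}$ if and only if $p=2$, $\operatorname{ord}_2(k)\le\operatorname{ord}_2(\ell)$, and $c^{q^2}+c^q+c\ne 0$.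
   Context: A polynomial permutes $\mathbb{F}_{q^3}$ if the induced map $\mathbb{F}_{q^3}\to\mathbb{F}_{q^3}$ is a bijection. $\operatorname{Tr}_{\mathbb{F}_{q^3}/\mathbb{F}_q}(c)=c^{q^2}+c^q+c$. For a nonzero integer $N$, $\operatorname{ord}_2(N)$ is the largest integer $s\ge0$ with $2^s\mid N$, and $\operatorname{ord}_2(0)=\infty$. *)

theory Defs
  imports "HOL-Computational_Algebra.Computational_Algebra" "HOL-Library.Extended_Nat"
begin

definition tr3 :: "nat \<Rightarrow> 'a::field \<Rightarrow> 'a" where
  "tr3 q c = c ^ (q ^ 2) + c ^ q + c"

definition ord2 :: "nat \<Rightarrow> enat" where
  "ord2 n = (if n = 0 then \<infinity> else enat (multiplicity (2::nat) n))"

end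

(*
  Write f = h o L + g with L x = x^q - x, h y = y^(Q+1) and g x = Tr (c x^R). The map L has
  kernel F_q and its image is the kernel of the trace, while g is additive with g t = t^R Tr c
  on F_q. Hence f is injective iff Tr c <> 0 and h separates trace-zero elements modulo F_q:
  y1^(Q+1) - y2^(Q+1) in F_q must force y1 = y2. A (Q+1)-th root of unity z <> 1 in F_q breaks
  this (x and z x + t collide for a suitable t in F_q), so gcd (q-1) (Q+1) = 1 is necessary, and
  elementary number theory turns this gcd condition into p = 2 and ord2 k <= ord2 l.
  Conversely, let p = 2 and adjoin a primitive cube root of unity w. On trace-zero y the Frobenius
  satisfies phi^2 = phi + 1, so y = a + b with a = y^q + w y and b = y^q + w^2 y eigenvectors of
  phi (k even) or of phi^2 (k odd), with the two primitive cube roots of unity as eigenvalues.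
  Expanding y^(Q+1) into eigencomponents, the condition that y1^(Q+1) + y2^(Q+1) is fixed by
  Frobenius kills every component with a nontrivial eigenvalue. What remains is a1^e = a2^e
  (or b1^e = b2^e) with e = Q + 1 or e = qQ + 1 coprime to m - 1, where a^m = w a is the
  eigenvector relation, and this forces a1 = a2 and b1 = b2.
*)
theory Submission
  imports Defs "HOL-Number_Theory.Number_Theory" "HOL-Algebra.Algebraic_Closure_Type"
begin

\<comment> \<open>otherwise HOL-Algebra's \<open>prime\<close> would shadow the one of the theorem\<close>
hide_const (open) Divisibility.prime

section \<open>Coprimality of p ^ k - 1 and p ^ l + 1\<close>

lemma dvd_of_dvd_double_if_ord2_le:
  fixes d a b :: nat
  assumes "d dvd a" "d dvd 2 * b" "a \<noteq> 0" "ord2 a \<le> ord2 b"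
  shows "d dvd b"
proof (cases "b = 0")
  case False
  show ?thesis
  proof (rule multiplicity_le_imp_dvd)
    show "d \<noteq> 0" using assms(1,3) by auto
  next
    fix r :: nat assume r: "prime r"
    show "multiplicity r d \<le> multiplicity r b"
    proof (cases "r = 2")
      case True
      have "multiplicity 2 d \<le> multiplicity 2 a"
        using assms(1,3) by (rule dvd_imp_multiplicity_le)
      also have "\<dots> \<le> multiplicity 2 b"
        using assms(3,4) False by (simp add: ord2_def)
      finally show ?thesis using True by simp
    next
      case False
      have "multiplicity r d \<le> multiplicity r (2 * b)"
        using assms(2) \<open>b \<noteq> 0\<close> by (intro dvd_imp_multiplicity_le) auto
      also have "\<dots> = multiplicity r b"
        using r False \<open>b \<noteq> 0\<close> multiplicity_distinct_prime_power[of r 2 1]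
        by (simp add: prime_elem_multiplicity_mult_distrib)
      finally show ?thesis .
    qed
  qed
qed simp

lemma even_if_ord2_le:
  assumes "even k" "k \<noteq> 0" "ord2 k \<le> ord2 l"
  shows "even l"
proof (cases "l = 0")
  case False
  have "1 \<le> multiplicity 2 k"
    using assms(1,2) by (intro multiplicity_geI) auto
  also have "\<dots> \<le> multiplicity 2 l"
    using assms(2,3) False by (simp add: ord2_def)
  finally show ?thesis
    using multiplicity_dvd'[of 1 2 l] by simp
qed simp

lemma ord2_double_le_if_odd:
  assumes "odd k" "even b"
  shows "ord2 (2 * k) \<le> ord2 b"
proof (cases "b = 0")
  case False
  have "multiplicity 2 (2 * k) = 1"
    using assms(1) by (intro multiplicity_decomposeI[where x' = k]) simp_all
  moreover have "1 \<le> multiplicity 2 b"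
    using assms(2) False by (intro multiplicity_geI) auto
  ultimately show ?thesis
    using False assms(1) by (auto simp: ord2_def odd_pos)
qed (simp add: ord2_def)

lemma coprime_two_power_add_one_two_power_sub_one:
  fixes a b :: nat
  assumes "a > 0" "ord2 a \<le> ord2 b"
  shows "coprime (2 ^ b + 1) (2 ^ a - 1 :: nat)"
proof (rule coprimeI)
  fix d :: nat
  assume db: "d dvd 2 ^ b + 1" and da: "d dvd 2 ^ a - 1"
  have "(2 ^ b + 1) * (2 ^ b - 1) = (2::nat) ^ (2 * b) - 1"
    by (simp add: power_mult algebra_simps power2_eq_square)
  then have "d dvd 2 ^ (2 * b) - 1"
    using db by (metis dvd_mult2)
  then have "[2 ^ a = 1] (mod d)" "[2 ^ (2 * b) = 1] (mod d)"
    using da by (simp_all add: cong_altdef_nat)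
  then have "ord d 2 dvd a" "ord d 2 dvd 2 * b"
    by (simp_all add: ord_divides')
  then have "ord d 2 dvd b"
    by (rule dvd_of_dvd_double_if_ord2_le) (use assms in simp_all)
  then have "d dvd 2 ^ b - 1"
    by (simp add: cong_altdef_nat flip: ord_divides')
  then have "d dvd (2 ^ b + 1) - (2 ^ b - 1)"
    using db by (rule dvd_diff_nat[rotated])
  then have "d = 1 \<or> d = 2"
    using two_is_prime_nat prime_nat_iff by auto
  moreover have "odd d"
  proof
    assume "even d"
    then have "even (2 ^ a - 1 :: nat)"
      using da by (rule dvd_trans)
    then show False
      using assms(1) by simp
  qed
  ultimately show "is_unit d"
    by auto
qed

lemma coprime_two_power_add_one_four_power_sub_one:
  fixes k b :: nat
  assumes "odd k" and "even b"
  shows "coprime (2 ^ b + 1) (2 ^ (2 * k) - 1 :: nat)"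
  using coprime_two_power_add_one_two_power_sub_one[OF _ ord2_double_le_if_odd[OF assms]] odd_pos[OF assms(1)]
  by simp

lemma add_one_dvd_power_add_one:
  fixes x :: int
  assumes "odd n"
  shows "x + 1 dvd x ^ n + 1"
proof -
  have "[x ^ n = (- 1) ^ n] (mod x + 1)"
    by (rule cong_pow) (simp add: cong_iff_dvd_diff)
  then show ?thesis
    using assms by (simp add: cong_iff_dvd_diff)
qed

lemma add_one_dvd_power_sub_one:
  fixes x :: int
  assumes "even n"
  shows "x + 1 dvd x ^ n - 1"
proof -
  have "[x ^ n = (- 1) ^ n] (mod x + 1)"
    by (rule cong_pow) (simp add: cong_iff_dvd_diff)
  then show ?thesis
    using assms by (simp add: cong_iff_dvd_diff)
qed

lemma ord2_le_if_coprime_two_power_sub_one_add_one: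
  fixes k l :: nat
  assumes "k > 0" and cop: "coprime (2 ^ k - 1) (2 ^ l + 1 :: nat)"
  shows "ord2 k \<le> ord2 l"
proof (rule ccontr)
  assume "\<not> ord2 k \<le> ord2 l"
  then have "l \<noteq> 0" and less: "multiplicity 2 l < multiplicity 2 k"
    using \<open>k > 0\<close> by (auto simp: ord2_def split: if_splits)
  define t where "t = multiplicity 2 l"
  define l' where "l' = l div 2 ^ t"
  have l: "l = 2 ^ t * l'"
    using multiplicity_dvd[of 2 l] by (simp add: l'_def t_def)
  have "odd l'"
    using multiplicity_decompose[of l 2] \<open>l \<noteq> 0\<close> by (simp add: l'_def t_def)
  have "2 ^ Suc t dvd k"
    by (rule multiplicity_dvd') (use less in \<open>simp add: t_def\<close>)
  then obtain r where k: "k = 2 ^ t * (2 * r)"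
    by (auto elim!: dvdE)
  \<comment> \<open>the Fermat number \<open>2 ^ 2 ^ t + 1\<close> divides both numbers\<close>
  define x :: int where "x = 2 ^ 2 ^ t"
  have "x + 1 dvd 2 ^ k - 1"
    using add_one_dvd_power_sub_one[of "2 * r" x] by (simp add: x_def k power_mult)
  moreover have "x + 1 dvd 2 ^ l + 1"
    using add_one_dvd_power_add_one[OF \<open>odd l'\<close>, of x] by (simp add: x_def l power_mult)
  moreover have "coprime (2 ^ k - 1 :: int) (2 ^ l + 1)"
    using cop unfolding coprime_int_iff[symmetric] by (simp add: of_nat_diff add.commute)
  ultimately have "is_unit (x + 1)"
    using coprime_common_divisor by blast
  moreover have "x \<ge> 2 ^ 1"
    unfolding x_def by (rule power_increasing) simp_all
  ultimately show False
    by simp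
qed

lemma coprime_prime_power_sub_one_add_one_iff:
  fixes p k l :: nat
  assumes p: "prime p" and "k > 0"
  shows "coprime (p ^ k - 1) (p ^ l + 1) \<longleftrightarrow> p = 2 \<and> ord2 k \<le> ord2 l"
proof
  assume cop: "coprime (p ^ k - 1) (p ^ l + 1)"
  have "p = 2"
  proof (rule ccontr)
    assume "p \<noteq> 2"
    then have "odd p"
      using p prime_ge_2_nat[OF p] by (intro prime_odd_nat) simp_all
    then have "2 dvd p ^ k - 1" "2 dvd p ^ l + 1"
      by (simp_all add: odd_pos)
    then show False
      using coprime_common_divisor_nat[OF cop] by (metis numeral_eq_one_iff semiring_norm(85))
  qed
  with cop show "p = 2 \<and> ord2 k \<le> ord2 l"
    using ord2_le_if_coprime_two_power_sub_one_add_one[OF \<open>k > 0\<close>] by simp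
next
  assume "p = 2 \<and> ord2 k \<le> ord2 l"
  then show "coprime (p ^ k - 1) (p ^ l + 1)"
    using coprime_two_power_add_one_two_power_sub_one[OF \<open>k > 0\<close>] by (simp add: coprime_commute)
qed

section \<open>Finite fields\<close>

lemma nat_pow_ring_of_type_algebra:
  "x [^]\<^bsub>ring_of_type_algebra\<^esub> (n::nat) = (x :: 'a :: comm_ring_1) ^ n"
  by (induction n) (simp_all add: ring_of_type_algebra_def)

lemma power_card_UNIV_sub_one_eq_1:
  fixes x :: "'a :: {finite, field}"
  assumes "x \<noteq> 0"
  shows "x ^ (card (UNIV :: 'a set) - 1) = 1"
proof -
  interpret R: field "ring_of_type_algebra :: 'a ring" ..
  have units: "Units (ring_of_type_algebra :: 'a ring) = UNIV - {0}"
    using R.field_Units by (simp add: ring_of_type_algebra_def)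
  show ?thesis
    using R.units_power_order_eq_one[of x] assms
    by (simp add: units nat_pow_ring_of_type_algebra card_Diff_singleton)
       (simp add: ring_of_type_algebra_def)
qed

lemma power_card_UNIV_eq_self:
  fixes x :: "'a :: {finite, field}"
  shows "x ^ card (UNIV :: 'a set) = x"
proof (cases "x = 0")
  case False
  have "Suc (card (UNIV :: 'a set) - 1) = card (UNIV :: 'a set)"
    by (simp add: finite_UNIV_card_ge_0)
  then show ?thesis
    using power_card_UNIV_sub_one_eq_1[OF False] by (metis power_Suc mult_1_right)
qed (simp add: finite_UNIV_card_ge_0)

lemma CHAR_eq_if_card_eq_prime_power:
  assumes "prime p" and "card (UNIV :: 'a :: {finite, field} set) = p ^ n"
  shows "CHAR('a) = p"
proof -
  have "prime CHAR('a)"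
    by (simp add: finite_imp_CHAR_pos prime_CHAR_semidom)
  moreover have "CHAR('a) dvd p ^ n"
    using CHAR_dvd_CARD[where 'a = 'a] assms(2) by simp
  ultimately show ?thesis
    using assms(1) by (metis prime_dvd_power primes_dvd_imp_eq)
qed

lemma card_roots_pow_eq_pow_le:
  assumes "m < n"
  shows "card {x :: 'a :: idom. x ^ n = x ^ m} \<le> n"
proof -
  define P :: "'a poly" where "P = Polynomial.monom 1 n - Polynomial.monom 1 m"
  have "Polynomial.coeff P n = 1"
    using assms by (simp add: P_def coeff_monom)
  then have "P \<noteq> 0"
    by auto
  have "{x. x ^ n = x ^ m} = {x. poly P x = 0}"
    by (simp add: P_def poly_monom)
  also have "card \<dots> \<le> Polynomial.degree P"
    using \<open>P \<noteq> 0\<close> by (rule card_poly_roots_bound)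
  also have "Polynomial.degree P \<le> n"
    unfolding P_def using assms by (intro degree_diff_le) (auto simp: degree_monom_eq)
  finally show ?thesis .
qed

lemma exists_nontrivial_root_of_unity:
  assumes "1 < d" and "d dvd card (UNIV :: 'a set) - 1"
  obtains z :: "'a :: {finite, field}" where "z \<noteq> 1" and "z ^ d = 1"
proof -
  define U where "U = UNIV - {0 :: 'a}"
  have card_U: "card U = card (UNIV :: 'a set) - 1"
    by (simp add: U_def card_Diff_singleton)
  obtain e where e: "card U = d * e"
    using assms(2) card_U by (auto elim: dvdE)
  have "card {0, 1 :: 'a} \<le> card (UNIV :: 'a set)"
    by (rule card_mono) simp_all
  then have "card U \<noteq> 0"
    by (simp add: card_U)
  then have "e < card U"
    using e assms(1) by simp
  have "\<not> U \<subseteq> {w. w ^ e = w ^ 0}"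
  proof
    assume "U \<subseteq> {w. w ^ e = w ^ 0}"
    then have "card U \<le> card {w :: 'a. w ^ e = w ^ 0}"
      by (rule card_mono[rotated]) simp
    also have "\<dots> \<le> e"
      using \<open>e < card U\<close> e by (intro card_roots_pow_eq_pow_le) (simp add: gr0I)
    finally show False
      using \<open>e < card U\<close> by simp
  qed
  then obtain w where "w \<in> U" and "w ^ e \<noteq> 1"
    by auto
  have "(w ^ e) ^ d = w ^ card U"
    by (simp add: e mult.commute flip: power_mult)
  also have "\<dots> = 1"
    using power_card_UNIV_sub_one_eq_1[of w] \<open>w \<in> U\<close> by (simp add: U_def card_U)
  finally show ?thesis
    using that \<open>w ^ e \<noteq> 1\<close> by blast
qed

section \<open>Eigenvectors of an additive power map\<close>

lemma eigenvector_power: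
  fixes a u :: "'a :: comm_monoid_mult"
  assumes "a ^ m = u * a"
  shows "(a ^ n) ^ m = u ^ n * a ^ n"
proof -
  have "(a ^ n) ^ m = (a ^ m) ^ n"
    by (simp flip: power_mult add: mult.commute)
  then show ?thesis
    by (simp add: assms power_mult_distrib)
qed

lemma eigen_monomial_sum:
  fixes a1 a2 b1 b2 u v :: "'a :: comm_semiring_1"
  assumes frob: "\<And>x y :: 'a. (x + y) ^ m = x ^ m + y ^ m"
    and a: "a1 ^ m = u * a1" "a2 ^ m = u * a2" and b: "b1 ^ m = v * b1" "b2 ^ m = v * b2"
  shows "(a1 ^ i * b1 ^ j + a2 ^ i * b2 ^ j) ^ m = u ^ i * v ^ j * (a1 ^ i * b1 ^ j + a2 ^ i * b2 ^ j)"
  unfolding frob power_mult_distrib eigenvector_power[OF a(1)] eigenvector_power[OF a(2)]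
    eigenvector_power[OF b(1)] eigenvector_power[OF b(2)]
  by (simp add: algebra_simps)

lemma add_power_Suc_expand:
  fixes a b :: "'a :: comm_semiring_1"
  assumes "(a + b) ^ Q = a ^ Q + b ^ Q"
  shows "(a + b) ^ (Q + 1) = a ^ (Q + 1) + b ^ (Q + 1) + (a ^ Q * b + a * b ^ Q)"
  by (simp add: assms algebra_simps)

lemma eigenvectors_eq_0_if_sum_fixed:
  fixes x y z u v :: "'a :: field"
  assumes add: "\<And>a b :: 'a. (a + b) ^ m = a ^ m + b ^ m"
    and "u ^ m = u" "v ^ m = v" "u \<noteq> 1" "v \<noteq> 1" "u \<noteq> v"
    and x: "x ^ m = u * x" and y: "y ^ m = v * y" and z: "z ^ m = z"
    and fixed: "(x + y + z) ^ m = x + y + z"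
  shows "x = 0 \<and> y = 0"
proof -
  have "m \<noteq> 0"
  proof
    assume "m = 0"
    then have "(1::'a) = 1 + 1"
      using add[of 1 0] by (simp only: power_0 add_0_right)
    then show False
      by (metis add_cancel_left_right add_cancel_right_right one_neq_zero)
  qed
  have diff: "(a - b) ^ m = a ^ m - b ^ m" for a b :: 'a
    using add[of "a - b" b] by simp
  have E1: "(u - 1) * x + (v - 1) * y = 0"
    using fixed by (simp add: add x y z algebra_simps)
  have "((u - 1) * x + (v - 1) * y) ^ m = (u - 1) * u * x + (v - 1) * v * y"
    by (simp add: add diff power_mult_distrib x y \<open>u ^ m = u\<close> \<open>v ^ m = v\<close>)
  then have E2: "(u - 1) * u * x + (v - 1) * v * y = 0"
    using E1 \<open>m \<noteq> 0\<close> by (simp add: zero_power)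
  have "(v - 1) * (u - v) * y = u * ((u - 1) * x + (v - 1) * y) - ((u - 1) * u * x + (v - 1) * v * y)"
    by (simp add: algebra_simps)
  then have "y = 0"
    using E1 E2 \<open>v \<noteq> 1\<close> \<open>u \<noteq> v\<close> by simp
  then show ?thesis
    using E1 \<open>u \<noteq> 1\<close> by simp
qed

lemma eq_if_power_eq_of_eigenvectors:
  fixes a b u :: "'a :: field"
  assumes a: "a ^ Suc n = u * a" and b: "b ^ Suc n = u * b" and "u \<noteq> 0"
    and "a ^ e = b ^ e" and "coprime e n" and "e > 0"
  shows "a = b"
proof -
  have iter: "x ^ (j * n + 1) = u ^ j * x" if x: "x ^ Suc n = u * x" for x :: 'a and j
  proof (induction j)
    case (Suc j)
    have "Suc j * n + 1 = n + (j * n + 1)"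
      by simp
    then have "x ^ (Suc j * n + 1) = x ^ n * x ^ (j * n + 1)"
      by (simp only: power_add)
    also have "\<dots> = u ^ j * x ^ Suc n"
      by (simp only: Suc.IH) (simp add: mult_ac)
    also have "\<dots> = u ^ Suc j * x"
      by (simp only: x) simp
    finally show ?case .
  qed simp
  obtain i j where "e * i = n * j + gcd e n"
    using bezout_nat[of e n] \<open>e > 0\<close> by auto
  then have ij: "e * i = j * n + 1"
    using \<open>coprime e n\<close> by simp
  have "a ^ (e * i) = b ^ (e * i)"
    by (simp add: power_mult \<open>a ^ e = b ^ e\<close>)
  then have "u ^ j * a = u ^ j * b"
    by (simp only: ij iter[OF a] iter[OF b])
  then show ?thesis
    using \<open>u \<noteq> 0\<close> by simp
qed

lemma swapped_eigenvectors:
  fixes a b \<omega> :: "'a :: comm_ring_1"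
  assumes a: "a ^ q = \<omega> * b" and b: "b ^ q = \<omega> ^ 2 * a"
    and \<omega>_q: "\<omega> ^ q = \<omega> ^ 2" and \<omega>3: "\<omega> ^ 3 = 1"
  shows "a ^ (q * q) = \<omega> * a" "b ^ (q * q) = \<omega> ^ 2 * b" "b = \<omega> ^ 2 * a ^ q"
proof -
  have "\<omega> ^ 2 * \<omega> ^ 2 = \<omega> ^ 3 * \<omega>"
    by (simp flip: power_add power_Suc2)
  then have \<omega>4: "\<omega> ^ 2 * \<omega> ^ 2 = \<omega>"
    using \<omega>3 by simp
  have \<omega>2_q: "(\<omega> ^ 2) ^ q = \<omega>"
    using \<omega>_q \<omega>4 by (metis power_mult mult.commute power2_eq_square)
  have "a ^ (q * q) = (\<omega> * b) ^ q"
    by (simp add: power_mult a)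
  also have "\<dots> = (\<omega> ^ 2 * \<omega> ^ 2) * a"
    by (simp only: power_mult_distrib \<omega>_q b mult.assoc)
  finally show "a ^ (q * q) = \<omega> * a"
    by (simp only: \<omega>4)
  have "b ^ (q * q) = (\<omega> ^ 2 * a) ^ q"
    by (simp add: power_mult b)
  also have "\<dots> = \<omega> * (\<omega> * b)"
    by (simp only: power_mult_distrib \<omega>2_q a)
  also have "\<dots> = \<omega> ^ 2 * b"
    by (simp add: power2_eq_square)
  finally show "b ^ (q * q) = \<omega> ^ 2 * b" .
  have "\<omega> ^ 2 * a ^ q = \<omega> ^ 3 * b"
    by (simp add: a power3_eq_cube power2_eq_square mult.assoc)
  then show "b = \<omega> ^ 2 * a ^ q"
    using \<omega>3 by simp
qed

section \<open>Trace-zero elements in characteristic 2\<close>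

lemma add_power_two_power_CHAR_2:
  assumes "CHAR('a :: comm_semiring_1) = 2"
  shows "(x + y :: 'a) ^ (2 ^ n) = x ^ (2 ^ n) + y ^ (2 ^ n)"
  by (rule freshmans_dream') (simp_all add: assms)

lemma add_eq_0_iff_eq_CHAR_2:
  assumes "CHAR('a :: ring_1) = 2"
  shows "(x + y :: 'a) = 0 \<longleftrightarrow> x = y"
  using uminus_CHAR_2[OF assms, of y] by (metis add_eq_0_iff2)

lemma cube_root_of_unity_CHAR_2:
  fixes \<zeta> :: "'a :: field"
  assumes char: "CHAR('a) = 2" and \<zeta>: "\<zeta> ^ 2 + \<zeta> + 1 = 0"
  shows "\<zeta> ^ 2 = \<zeta> + 1" "\<zeta> ^ 3 = 1" "\<zeta> \<noteq> 0" "\<zeta> \<noteq> 1" "\<zeta> ^ 2 \<noteq> 1" "\<zeta> ^ 2 \<noteq> \<zeta>"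
    and "(\<zeta> ^ 2) ^ 2 = \<zeta>" "(\<zeta> ^ 2) ^ 2 + \<zeta> ^ 2 + 1 = 0"
proof -
  have two: "(2::'a) = 0"
    using of_nat_CHAR[where 'a = 'a] char by simp
  show sq: "\<zeta> ^ 2 = \<zeta> + 1"
    using \<zeta> add_eq_0_iff_eq_CHAR_2[OF char, of "\<zeta> ^ 2" "\<zeta> + 1"] by (simp add: add.assoc)
  have "\<zeta> ^ 3 = \<zeta> * \<zeta> ^ 2"
    by (simp add: power3_eq_cube power2_eq_square)
  also have "\<dots> = \<zeta> * (\<zeta> + 1)"
    by (simp only: sq)
  also have "\<dots> = \<zeta> ^ 2 + \<zeta>"
    by (simp add: algebra_simps power2_eq_square)
  also have "\<dots> = 1"
    using \<zeta> add_eq_0_iff_eq_CHAR_2[OF char, of "\<zeta> ^ 2 + \<zeta>" 1] by simp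
  finally show cube: "\<zeta> ^ 3 = 1" .
  show "\<zeta> \<noteq> 0"
    using \<zeta> by auto
  show "\<zeta> \<noteq> 1"
  proof
    assume "\<zeta> = 1"
    then have "(1::'a) = 0"
      using \<zeta> two by (simp add: numeral_3_eq_3 algebra_simps)
    then show False
      by simp
  qed
  then show "\<zeta> ^ 2 \<noteq> 1" "\<zeta> ^ 2 \<noteq> \<zeta>"
    using sq \<open>\<zeta> \<noteq> 0\<close> by auto
  have "(\<zeta> ^ 2) ^ 2 = \<zeta> ^ 3 * \<zeta>"
    by (simp flip: power_mult power_Suc2)
  then show "(\<zeta> ^ 2) ^ 2 = \<zeta>"
    using cube by simp
  then show "(\<zeta> ^ 2) ^ 2 + \<zeta> ^ 2 + 1 = 0"
    using \<zeta> by (simp add: algebra_simps)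
qed

lemma sum_cube_root_twists_CHAR_2:
  fixes \<zeta> :: "'a :: field"
  assumes char: "CHAR('a) = 2" and \<zeta>: "\<zeta> ^ 2 + \<zeta> + 1 = 0"
  shows "(x + \<zeta> * y) + (x + \<zeta> ^ 2 * y) = y"
proof -
  have "(x + \<zeta> * y) + (x + \<zeta> ^ 2 * y) = (x + x) + ((\<zeta> + \<zeta>) + 1) * y"
    by (simp add: cube_root_of_unity_CHAR_2(1)[OF char \<zeta>] algebra_simps)
  then show ?thesis
    using of_nat_CHAR[where 'a = 'a] char by simp
qed

lemma power_eq_power_mod_if_power_eq_1:
  fixes x :: "'a :: monoid_mult"
  assumes "x ^ m = 1"
  shows "x ^ n = x ^ (n mod m)"
proof -
  have "x ^ n = (x ^ m) ^ (n div m) * x ^ (n mod m)"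
    by (simp flip: power_mult power_add)
  then show ?thesis
    using assms by simp
qed

lemma two_power_mod_3: "(2::nat) ^ n mod 3 = (if even n then 1 else 2)"
proof (induction n)
  case (Suc n)
  have "(2::nat) ^ Suc n mod 3 = 2 * (2 ^ n mod 3) mod 3"
    by (simp add: mod_mult_right_eq)
  with Suc.IH show ?case
    by simp
qed simp

lemma power_two_power_cube_root_of_unity:
  fixes \<zeta> :: "'a :: monoid_mult"
  assumes "\<zeta> ^ 3 = 1"
  shows "\<zeta> ^ (2 ^ k) = (if even k then \<zeta> else \<zeta> ^ 2)"
  using power_eq_power_mod_if_power_eq_1[OF assms, of "2 ^ k"] by (simp add: two_power_mod_3)

lemma frobenius_twist_trace_zero:
  fixes y \<zeta> :: "'a :: field"
  assumes char: "CHAR('a) = 2" and q: "q = 2 ^ k"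
    and \<zeta>: "\<zeta> ^ 2 + \<zeta> + 1 = 0" and tr: "tr3 q y = 0"
  shows "(y ^ q + \<zeta> * y) ^ q = \<zeta> ^ (2 * q) * (y ^ q + \<zeta> ^ q * y)"
proof -
  note frob = add_power_two_power_CHAR_2[OF char, of _ _ k, folded q]
  note cube = cube_root_of_unity_CHAR_2[OF char \<zeta>]
  have "y ^ (q ^ 2) = y ^ q + y"
    using tr add_eq_0_iff_eq_CHAR_2[OF char, of "y ^ (q ^ 2)" "y ^ q + y"]
    by (simp add: tr3_def add.assoc)
  then have yqq: "(y ^ q) ^ q = y ^ q + y"
    by (simp add: power2_eq_square power_mult)
  have \<zeta>2q: "\<zeta> ^ (2 * q) = \<zeta> ^ q + 1"
    by (simp add: power_mult cube(1) frob)
  have "\<zeta> ^ (2 * q) * \<zeta> ^ q = (\<zeta> ^ 3) ^ q"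
    by (simp flip: power_add power_mult)
  then have "\<zeta> ^ (2 * q) * \<zeta> ^ q = 1"
    by (simp add: cube(2))
  then have "\<zeta> ^ (2 * q) * (y ^ q + \<zeta> ^ q * y) = (\<zeta> ^ q + 1) * y ^ q + y"
    by (simp add: \<zeta>2q distrib_left mult.assoc[symmetric])
  also have "\<dots> = (y ^ q + \<zeta> * y) ^ q"
    by (simp add: frob yqq power_mult_distrib algebra_simps)
  finally show ?thesis ..
qed

lemma frobenius_trace_zero_even:
  fixes y \<zeta> :: "'a :: field"
  assumes "CHAR('a) = 2" and "\<zeta> ^ 2 + \<zeta> + 1 = 0" and "even k" and "tr3 (2 ^ k) y = 0"
  shows "(y ^ 2 ^ k + \<zeta> * y) ^ 2 ^ k = \<zeta> ^ 2 * (y ^ 2 ^ k + \<zeta> * y)"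
  using frobenius_twist_trace_zero[OF assms(1) refl assms(2,4)] assms(3)
    power_two_power_cube_root_of_unity[OF cube_root_of_unity_CHAR_2(2)[OF assms(1,2)], of k]
  by (simp add: mult.commute[of 2] power_mult)

lemma frobenius_trace_zero_odd:
  fixes y \<zeta> :: "'a :: field"
  assumes "CHAR('a) = 2" and "\<zeta> ^ 2 + \<zeta> + 1 = 0" and "odd k" and "tr3 (2 ^ k) y = 0"
  shows "(y ^ 2 ^ k + \<zeta> * y) ^ 2 ^ k = \<zeta> * (y ^ 2 ^ k + \<zeta> ^ 2 * y)"
  using frobenius_twist_trace_zero[OF assms(1) refl assms(2,4)] assms(3)
    power_two_power_cube_root_of_unity[OF cube_root_of_unity_CHAR_2(2)[OF assms(1,2)], of k]
    cube_root_of_unity_CHAR_2(7)[OF assms(1,2)]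
  by (simp add: mult.commute[of 2] power_mult)

lemma power_components_eq_if_power_sum_fixed:
  fixes a1 a2 b1 b2 \<zeta> :: "'a :: field"
  assumes char: "CHAR('a) = 2" and \<zeta>: "\<zeta> ^ 2 + \<zeta> + 1 = 0"
    and m: "m = 2 ^ s" and \<zeta>_m: "\<zeta> ^ m = \<zeta>"
    and a: "a1 ^ m = \<zeta> * a1" "a2 ^ m = \<zeta> * a2"
    and b: "b1 ^ m = \<zeta> ^ 2 * b1" "b2 ^ m = \<zeta> ^ 2 * b2"
    and Q: "Q = 2 ^ l" "even l"
    and fixed: "((a1 + b1) ^ (Q + 1) + (a2 + b2) ^ (Q + 1)) ^ m
                  = (a1 + b1) ^ (Q + 1) + (a2 + b2) ^ (Q + 1)"
  shows "a1 ^ (Q + 1) = a2 ^ (Q + 1) \<and> b1 ^ (Q + 1) = b2 ^ (Q + 1)"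
proof -
  note cube = cube_root_of_unity_CHAR_2[OF char \<zeta>]
  note frob = add_power_two_power_CHAR_2[OF char]
  have frob_m: "(x + y) ^ m = x ^ m + y ^ m" for x y :: 'a
    unfolding m by (rule frob)
  note eigen = eigen_monomial_sum[OF frob_m a b]
  have \<zeta>_mod: "\<zeta> ^ n = \<zeta> ^ (n mod 3)" for n
    using cube(2) by (rule power_eq_power_mod_if_power_eq_1)
  have "Q mod 3 = 1"
    using two_power_mod_3[of l] Q by simp
  then have "(Q + 1) mod 3 = 2" "(2 * Q + 2) mod 3 = 1" "(Q + 2) mod 3 = 0" "(2 * Q + 1) mod 3 = 0"
    by presburger+
  then have exps: "\<zeta> ^ (Q + 1) = \<zeta> ^ 2" "(\<zeta> ^ 2) ^ (Q + 1) = \<zeta>"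
      "\<zeta> ^ Q * \<zeta> ^ 2 = 1" "\<zeta> * (\<zeta> ^ 2) ^ Q = 1"
    using \<zeta>_mod[of "Q + 1"] \<zeta>_mod[of "2 * Q + 2"] \<zeta>_mod[of "Q + 2"] \<zeta>_mod[of "2 * Q + 1"]
    by (simp_all flip: power_mult power_add power_Suc add: mult.commute)
  define A where "A = a1 ^ (Q + 1) + a2 ^ (Q + 1)"
  define B where "B = b1 ^ (Q + 1) + b2 ^ (Q + 1)"
  define C where "C = a1 ^ Q * b1 + a2 ^ Q * b2 + (a1 * b1 ^ Q + a2 * b2 ^ Q)"
  have "(a1 + b1) ^ (Q + 1) + (a2 + b2) ^ (Q + 1) = B + A + C"
    unfolding A_def B_def C_def Q add_power_Suc_expand[OF frob] by (simp add: algebra_simps)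
  then have "(B + A + C) ^ m = B + A + C"
    using fixed by simp
  moreover have "A ^ m = \<zeta> ^ 2 * A" "B ^ m = \<zeta> * B"
    using eigen[of "Q + 1" 0] eigen[of 0 "Q + 1"] exps by (simp_all add: A_def B_def)
  moreover have "C ^ m = C"
    using eigen[of Q 1] eigen[of 1 Q] exps by (simp add: C_def frob_m)
  moreover have "(\<zeta> ^ 2) ^ m = \<zeta> ^ 2"
    using \<zeta>_m by (metis power_mult mult.commute)
  ultimately have "B = 0 \<and> A = 0"
    using cube not_sym[OF cube(6)] \<zeta>_m frob_m
    by (intro eigenvectors_eq_0_if_sum_fixed[of m \<zeta> "\<zeta> ^ 2" B A C])
  then show ?thesis
    unfolding A_def B_def by (simp add: add_eq_0_iff_eq_CHAR_2[OF char])
qed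

lemma mixed_components_eq_if_power_sum_fixed:
  fixes a1 a2 b1 b2 \<zeta> :: "'a :: field"
  assumes char: "CHAR('a) = 2" and \<zeta>: "\<zeta> ^ 2 + \<zeta> + 1 = 0"
    and m: "m = 2 ^ s" and \<zeta>_m: "\<zeta> ^ m = \<zeta>"
    and a: "a1 ^ m = \<zeta> * a1" "a2 ^ m = \<zeta> * a2"
    and b: "b1 ^ m = \<zeta> ^ 2 * b1" "b2 ^ m = \<zeta> ^ 2 * b2"
    and Q: "Q = 2 ^ l" "odd l"
    and fixed: "((a1 + b1) ^ (Q + 1) + (a2 + b2) ^ (Q + 1)) ^ m
                  = (a1 + b1) ^ (Q + 1) + (a2 + b2) ^ (Q + 1)"
  shows "a1 * b1 ^ Q = a2 * b2 ^ Q"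
proof -
  note cube = cube_root_of_unity_CHAR_2[OF char \<zeta>]
  note frob = add_power_two_power_CHAR_2[OF char]
  have frob_m: "(x + y) ^ m = x ^ m + y ^ m" for x y :: 'a
    unfolding m by (rule frob)
  note eigen = eigen_monomial_sum[OF frob_m a b]
  have \<zeta>_mod: "\<zeta> ^ n = \<zeta> ^ (n mod 3)" for n
    using cube(2) by (rule power_eq_power_mod_if_power_eq_1)
  have "Q mod 3 = 2"
    using two_power_mod_3[of l] Q by simp
  then have "(Q + 1) mod 3 = 0" "(2 * Q + 2) mod 3 = 0" "(Q + 2) mod 3 = 1" "(2 * Q + 1) mod 3 = 2"
    by presburger+
  then have exps: "\<zeta> ^ (Q + 1) = 1" "(\<zeta> ^ 2) ^ (Q + 1) = 1"
      "\<zeta> ^ Q * \<zeta> ^ 2 = \<zeta>" "\<zeta> * (\<zeta> ^ 2) ^ Q = \<zeta> ^ 2"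
    using \<zeta>_mod[of "Q + 1"] \<zeta>_mod[of "2 * Q + 2"] \<zeta>_mod[of "Q + 2"] \<zeta>_mod[of "2 * Q + 1"]
    by (simp_all flip: power_mult power_add power_Suc add: mult.commute)
  define D where "D = a1 ^ (Q + 1) + a2 ^ (Q + 1) + (b1 ^ (Q + 1) + b2 ^ (Q + 1))"
  define C1 where "C1 = a1 ^ Q * b1 + a2 ^ Q * b2"
  define C2 where "C2 = a1 * b1 ^ Q + a2 * b2 ^ Q"
  have "(a1 + b1) ^ (Q + 1) + (a2 + b2) ^ (Q + 1) = C1 + C2 + D"
    unfolding D_def C1_def C2_def Q add_power_Suc_expand[OF frob] by (simp add: algebra_simps)
  then have "(C1 + C2 + D) ^ m = C1 + C2 + D"
    using fixed by simp
  moreover have "C1 ^ m = \<zeta> * C1" "C2 ^ m = \<zeta> ^ 2 * C2"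
    using eigen[of Q 1] eigen[of 1 Q] exps by (simp_all add: C1_def C2_def)
  moreover have "D ^ m = D"
    using eigen[of "Q + 1" 0] eigen[of 0 "Q + 1"] exps by (simp add: D_def frob_m)
  moreover have "(\<zeta> ^ 2) ^ m = \<zeta> ^ 2"
    using \<zeta>_m by (metis power_mult mult.commute)
  ultimately have "C2 = 0"
    using cube not_sym[OF cube(6)] \<zeta>_m frob_m eigenvectors_eq_0_if_sum_fixed[of m \<zeta> "\<zeta> ^ 2" C1 C2 D]
    by blast
  then show ?thesis
    unfolding C2_def by (simp add: add_eq_0_iff_eq_CHAR_2[OF char])
qed

lemma eigenvectors_eq_if_power_sum_fixed:
  fixes a1 a2 b1 b2 \<zeta> :: "'a :: field"
  assumes char: "CHAR('a) = 2" and \<zeta>: "\<zeta> ^ 2 + \<zeta> + 1 = 0"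
    and m: "m = 2 ^ s" and \<zeta>_m: "\<zeta> ^ m = \<zeta>"
    and a: "a1 ^ m = \<zeta> * a1" "a2 ^ m = \<zeta> * a2"
    and b: "b1 ^ m = \<zeta> ^ 2 * b1" "b2 ^ m = \<zeta> ^ 2 * b2"
    and Q: "Q = 2 ^ l" "even l" and cop: "coprime (Q + 1) (m - 1)"
    and fixed: "((a1 + b1) ^ (Q + 1) + (a2 + b2) ^ (Q + 1)) ^ m
                  = (a1 + b1) ^ (Q + 1) + (a2 + b2) ^ (Q + 1)"
  shows "a1 = a2 \<and> b1 = b2"
proof -
  have "Suc (m - 1) = m"
    by (simp add: m)
  then show ?thesis
    using power_components_eq_if_power_sum_fixed[OF assms(1-8) Q fixed] a b cop
      cube_root_of_unity_CHAR_2(3)[OF char \<zeta>]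
      eq_if_power_eq_of_eigenvectors[where a = a1 and b = a2 and u = \<zeta> and n = "m - 1" and e = "Q + 1"]
      eq_if_power_eq_of_eigenvectors[where a = b1 and b = b2 and u = "\<zeta> ^ 2" and n = "m - 1" and e = "Q + 1"]
    by simp
qed

lemma eigenvector_eq_if_twisted_power_sum_fixed:
  fixes a1 a2 b1 b2 \<zeta> :: "'a :: field"
  assumes char: "CHAR('a) = 2" and \<zeta>: "\<zeta> ^ 2 + \<zeta> + 1 = 0"
    and m: "m = 2 ^ s" and \<zeta>_m: "\<zeta> ^ m = \<zeta>"
    and a: "a1 ^ m = \<zeta> * a1" "a2 ^ m = \<zeta> * a2"
    and b: "b1 ^ m = \<zeta> ^ 2 * b1" "b2 ^ m = \<zeta> ^ 2 * b2"
    and twist: "b1 = \<zeta> ^ 2 * a1 ^ r" "b2 = \<zeta> ^ 2 * a2 ^ r"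
    and Q: "Q = 2 ^ l" "odd l" and cop: "coprime (r * Q + 1) (m - 1)"
    and fixed: "((a1 + b1) ^ (Q + 1) + (a2 + b2) ^ (Q + 1)) ^ m
                  = (a1 + b1) ^ (Q + 1) + (a2 + b2) ^ (Q + 1)"
  shows "a1 = a2"
proof -
  have "a1 * b1 ^ Q = a2 * b2 ^ Q"
    by (rule mixed_components_eq_if_power_sum_fixed[OF assms(1-8) Q fixed])
  moreover have "x * (\<zeta> ^ 2 * x ^ r) ^ Q = (\<zeta> ^ 2) ^ Q * x ^ (r * Q + 1)" for x
    by (simp add: power_mult_distrib power_mult[of x r Q] mult.left_commute)
  ultimately have "(\<zeta> ^ 2) ^ Q * a1 ^ (r * Q + 1) = (\<zeta> ^ 2) ^ Q * a2 ^ (r * Q + 1)"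
    by (simp only: twist)
  then have "a1 ^ (r * Q + 1) = a2 ^ (r * Q + 1)"
    using cube_root_of_unity_CHAR_2(3)[OF char \<zeta>] by simp
  moreover have "Suc (m - 1) = m"
    by (simp add: m)
  ultimately show ?thesis
    using a cop cube_root_of_unity_CHAR_2(3)[OF char \<zeta>]
      eq_if_power_eq_of_eigenvectors[where a = a1 and b = a2 and u = \<zeta> and n = "m - 1" and e = "r * Q + 1"]
    by simp
qed

lemma trace_zero_eq_if_power_sum_fixed_even:
  fixes y1 y2 \<omega> :: "'a :: field"
  assumes char: "CHAR('a) = 2" and \<omega>: "\<omega> ^ 2 + \<omega> + 1 = 0"
    and k: "even k" "k \<noteq> 0" and ord: "ord2 k \<le> ord2 l"
    and tr: "tr3 (2 ^ k) y1 = 0" "tr3 (2 ^ k) y2 = 0"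
    and fixed: "(y1 ^ (2 ^ l + 1) + y2 ^ (2 ^ l + 1)) ^ 2 ^ k = y1 ^ (2 ^ l + 1) + y2 ^ (2 ^ l + 1)"
  shows "y1 = y2"
proof -
  note cube = cube_root_of_unity_CHAR_2[OF char \<omega>]
  define \<alpha> where "\<alpha> y = y ^ 2 ^ k + \<omega> * y" for y
  define \<beta> where "\<beta> y = y ^ 2 ^ k + \<omega> ^ 2 * y" for y
  have sum: "\<alpha> y + \<beta> y = y" for y
    unfolding \<alpha>_def \<beta>_def by (rule sum_cube_root_twists_CHAR_2[OF char \<omega>])
  have \<alpha>_q: "\<alpha> y ^ 2 ^ k = \<omega> ^ 2 * \<alpha> y" if "tr3 (2 ^ k) y = 0" for y
    unfolding \<alpha>_def by (rule frobenius_trace_zero_even[OF char \<omega> k(1) that])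
  have \<beta>_q: "\<beta> y ^ 2 ^ k = (\<omega> ^ 2) ^ 2 * \<beta> y" if "tr3 (2 ^ k) y = 0" for y
    unfolding \<beta>_def by (rule frobenius_trace_zero_even[OF char cube(8) k(1) that])
  have "\<omega> ^ 2 ^ k = \<omega>"
    using power_two_power_cube_root_of_unity[OF cube(2)] k(1) by simp
  then have \<omega>2_q: "(\<omega> ^ 2) ^ 2 ^ k = \<omega> ^ 2"
    by (metis power_mult mult.commute)
  have "even l"
    using k ord by (rule even_if_ord2_le)
  moreover have "coprime (2 ^ l + 1) (2 ^ k - 1 :: nat)"
    using k ord by (intro coprime_two_power_add_one_two_power_sub_one) simp_all
  moreover have "((\<alpha> y1 + \<beta> y1) ^ (2 ^ l + 1) + (\<alpha> y2 + \<beta> y2) ^ (2 ^ l + 1)) ^ 2 ^ k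
                 = (\<alpha> y1 + \<beta> y1) ^ (2 ^ l + 1) + (\<alpha> y2 + \<beta> y2) ^ (2 ^ l + 1)"
    unfolding sum by (rule fixed)
  ultimately have "\<alpha> y1 = \<alpha> y2 \<and> \<beta> y1 = \<beta> y2"
    using eigenvectors_eq_if_power_sum_fixed[OF char cube(8) refl \<omega>2_q \<alpha>_q[OF tr(1)] \<alpha>_q[OF tr(2)]
        \<beta>_q[OF tr(1)] \<beta>_q[OF tr(2)] refl]
    by blast
  then show ?thesis
    using sum by metis
qed

lemma eigenvector_eq_if_power_sum_fixed_swapped:
  fixes a1 a2 b1 b2 \<omega> :: "'a :: field"
  assumes char: "CHAR('a) = 2" and \<omega>: "\<omega> ^ 2 + \<omega> + 1 = 0"
    and q: "q = 2 ^ k" "odd k" and \<omega>_qq: "\<omega> ^ (q * q) = \<omega>"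
    and a: "a1 ^ (q * q) = \<omega> * a1" "a2 ^ (q * q) = \<omega> * a2"
    and b: "b1 ^ (q * q) = \<omega> ^ 2 * b1" "b2 ^ (q * q) = \<omega> ^ 2 * b2"
    and twist: "b1 = \<omega> ^ 2 * a1 ^ q" "b2 = \<omega> ^ 2 * a2 ^ q"
    and fixed: "((a1 + b1) ^ (2 ^ l + 1) + (a2 + b2) ^ (2 ^ l + 1)) ^ (q * q)
                  = (a1 + b1) ^ (2 ^ l + 1) + (a2 + b2) ^ (2 ^ l + 1)"
  shows "a1 = a2"
proof -
  have qq: "q * q = 2 ^ (2 * k)" and qQ: "q * 2 ^ l = 2 ^ (k + l)"
    by (simp_all add: q(1) power_add mult_2)
  show ?thesis
  proof (cases "even l")
    case True
    have "coprime (2 ^ l + 1) (q * q - 1)"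
      unfolding qq by (rule coprime_two_power_add_one_four_power_sub_one[OF q(2) True])
    then show ?thesis
      using eigenvectors_eq_if_power_sum_fixed[OF char \<omega> qq \<omega>_qq a b refl True _ fixed] by blast
  next
    case False
    have "coprime (q * 2 ^ l + 1) (q * q - 1)"
      unfolding qq qQ by (rule coprime_two_power_add_one_four_power_sub_one) (use q(2) False in simp_all)
    then show ?thesis
      by (rule eigenvector_eq_if_twisted_power_sum_fixed[OF char \<omega> qq \<omega>_qq a b twist refl False _ fixed])
  qed
qed

lemma trace_zero_eq_if_power_sum_fixed_odd:
  fixes y1 y2 \<omega> :: "'a :: field"
  assumes char: "CHAR('a) = 2" and \<omega>: "\<omega> ^ 2 + \<omega> + 1 = 0" and k: "odd k"
    and tr: "tr3 (2 ^ k) y1 = 0" "tr3 (2 ^ k) y2 = 0"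
    and fixed: "(y1 ^ (2 ^ l + 1) + y2 ^ (2 ^ l + 1)) ^ 2 ^ k = y1 ^ (2 ^ l + 1) + y2 ^ (2 ^ l + 1)"
  shows "y1 = y2"
proof -
  note cube = cube_root_of_unity_CHAR_2[OF char \<omega>]
  define q :: nat where "q = 2 ^ k"
  define \<alpha> where "\<alpha> y = y ^ q + \<omega> * y" for y
  define \<beta> where "\<beta> y = y ^ q + \<omega> ^ 2 * y" for y
  have sum: "\<alpha> y + \<beta> y = y" for y
    unfolding \<alpha>_def \<beta>_def by (rule sum_cube_root_twists_CHAR_2[OF char \<omega>])
  have \<omega>_q: "\<omega> ^ q = \<omega> ^ 2"
    using power_two_power_cube_root_of_unity[OF cube(2)] k by (simp add: q_def)
  \<comment> \<open>for odd \<open>k\<close> the Frobenius swaps the two eigenlines, its square preserves them\<close>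
  have swap: "\<alpha> y ^ (q * q) = \<omega> * \<alpha> y" "\<beta> y ^ (q * q) = \<omega> ^ 2 * \<beta> y"
      "\<beta> y = \<omega> ^ 2 * \<alpha> y ^ q" if "tr3 (2 ^ k) y = 0" for y
  proof -
    have "\<alpha> y ^ q = \<omega> * \<beta> y" "\<beta> y ^ q = \<omega> ^ 2 * \<alpha> y"
      using frobenius_trace_zero_odd[OF char \<omega> k that] frobenius_trace_zero_odd[OF char cube(8) k that]
        cube(7) by (simp_all add: \<alpha>_def \<beta>_def q_def)
    then show "\<alpha> y ^ (q * q) = \<omega> * \<alpha> y" "\<beta> y ^ (q * q) = \<omega> ^ 2 * \<beta> y"
      "\<beta> y = \<omega> ^ 2 * \<alpha> y ^ q"
      using swapped_eigenvectors[OF _ _ \<omega>_q cube(2)] by blast+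
  qed
  have "((\<alpha> y1 + \<beta> y1) ^ (2 ^ l + 1) + (\<alpha> y2 + \<beta> y2) ^ (2 ^ l + 1)) ^ (q * q)
        = (\<alpha> y1 + \<beta> y1) ^ (2 ^ l + 1) + (\<alpha> y2 + \<beta> y2) ^ (2 ^ l + 1)"
    using fixed by (simp add: sum power_mult q_def)
  moreover have "\<omega> ^ (q * q) = \<omega>"
    using power_two_power_cube_root_of_unity[OF cube(2), of "2 * k"] by (simp add: q_def power_add mult_2)
  ultimately have "\<alpha> y1 = \<alpha> y2"
    using eigenvector_eq_if_power_sum_fixed_swapped[OF char \<omega> q_def k _ swap(1)[OF tr(1)] swap(1)[OF tr(2)]
        swap(2)[OF tr(1)] swap(2)[OF tr(2)] swap(3)[OF tr(1)] swap(3)[OF tr(2)]]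
    by blast
  then show ?thesis
    using sum swap(3)[OF tr(1)] swap(3)[OF tr(2)] by metis
qed

lemma trace_zero_eq_if_power_diff_fixed:
  fixes y1 y2 :: "'a :: field"
  assumes char: "CHAR('a) = 2" and "k > 0" and "ord2 k \<le> ord2 l"
    and tr: "tr3 (2 ^ k) y1 = 0" "tr3 (2 ^ k) y2 = 0"
    and fixed: "(y1 ^ (2 ^ l + 1) - y2 ^ (2 ^ l + 1)) ^ (2 ^ k) = y1 ^ (2 ^ l + 1) - y2 ^ (2 ^ l + 1)"
  shows "y1 = y2"
proof -
  have "\<exists>\<omega> :: 'a alg_closure. poly [:1, 1, 1:] \<omega> = 0"
    by (intro alg_closed_imp_poly_has_root) simp
  then obtain \<omega> :: "'a alg_closure" where \<omega>: "\<omega> ^ 2 + \<omega> + 1 = 0"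
    by (auto simp: algebra_simps power2_eq_square)
  have char': "CHAR('a alg_closure) = 2"
    using char by simp
  have tr': "tr3 (2 ^ k) (to_ac y1) = 0" "tr3 (2 ^ k) (to_ac y2) = 0"
    using tr by (simp_all add: tr3_def flip: to_ac_power to_ac_add)
  have "to_ac ((y1 ^ (2 ^ l + 1) + y2 ^ (2 ^ l + 1)) ^ (2 ^ k))
        = to_ac (y1 ^ (2 ^ l + 1) + y2 ^ (2 ^ l + 1))"
    using fixed by (simp add: minus_CHAR_2[OF char])
  then have fixed': "(to_ac y1 ^ (2 ^ l + 1) + to_ac y2 ^ (2 ^ l + 1)) ^ (2 ^ k)
                     = to_ac y1 ^ (2 ^ l + 1) + to_ac y2 ^ (2 ^ l + 1)"
    by simp
  have "to_ac y1 = to_ac y2"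
  proof (cases "even k")
    case True
    show ?thesis
      using assms(2,3) True
      by (intro trace_zero_eq_if_power_sum_fixed_even[OF char' \<omega> True _ _ tr' fixed']) simp_all
  next
    case False
    show ?thesis
      by (rule trace_zero_eq_if_power_sum_fixed_odd[OF char' \<omega> False tr' fixed'])
  qed
  then show ?thesis
    by simp
qed

section \<open>The permutation criterion\<close>

locale cubic_trace_map =
  fixes p k m :: nat and c :: "'a :: {finite, field}"
  assumes prime: "prime p" and k_pos: "k > 0" and card: "card (UNIV :: 'a set) = (p ^ k) ^ 3"
begin

abbreviation "q \<equiv> p ^ k"
abbreviation "R \<equiv> p ^ m"

definition F :: "nat \<Rightarrow> 'a \<Rightarrow> 'a" where
  "F e x = (x ^ q - x) ^ e + tr3 q (c * x ^ R)"

lemma CHAR_eq: "CHAR('a) = p"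
  using CHAR_eq_if_card_eq_prime_power[OF prime, of "k * 3"] card by (simp add: power_mult)

lemma q_gt_1: "q > 1"
  by (rule one_less_power[OF prime_gt_1_nat[OF prime] k_pos])

lemma add_power_p_power: "(x + y) ^ (p ^ n) = x ^ (p ^ n) + (y :: 'a) ^ (p ^ n)"
  by (rule freshmans_dream') (simp_all add: CHAR_eq prime)

lemma diff_power_p_power: "(x - y) ^ (p ^ n) = x ^ (p ^ n) - (y :: 'a) ^ (p ^ n)"
  using add_power_p_power[of "x - y" y n] by (simp add: algebra_simps)

lemma power_q_cube: "(((x :: 'a) ^ q) ^ q) ^ q = x"
  using power_card_UNIV_eq_self[of x] by (simp add: card power3_eq_cube flip: power_mult)

lemma tr3_add: "tr3 q (x + y) = tr3 q x + tr3 q (y :: 'a)"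
  using add_power_p_power[of x y k] add_power_p_power[of x y "2 * k"]
  by (simp add: tr3_def algebra_simps power_mult)

lemma tr3_power_q: "tr3 q x ^ q = tr3 q (x :: 'a)"
  by (simp add: tr3_def add_power_p_power power2_eq_square power_mult power_q_cube algebra_simps)

lemma tr3_mult_fixed: "t ^ q = t \<Longrightarrow> tr3 q (t * x) = t * tr3 q (x :: 'a)"
  by (simp add: tr3_def power_mult_distrib power2_eq_square power_mult algebra_simps)

lemma tr3_power_q_diff: "tr3 q ((x :: 'a) ^ q - x) = 0"
  by (simp add: tr3_def diff_power_p_power power2_eq_square power_mult power_q_cube)

lemma bij_power_R: "bij (\<lambda>x :: 'a. x ^ R)"
proof -
  have "inj (\<lambda>x :: 'a. x ^ R)"
  proof (rule injI)
    fix x y :: 'a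
    assume "x ^ R = y ^ R"
    then have "(x - y) ^ R = 0"
      by (simp add: diff_power_p_power)
    then show "x = y"
      by simp
  qed
  then show ?thesis
    by (simp add: bij_def finite_UNIV_inj_surj)
qed

lemma power_R_fixed_iff: "(t ^ R) ^ q = t ^ R \<longleftrightarrow> (t :: 'a) ^ q = t"
proof -
  have "(t ^ R) ^ q = (t ^ q) ^ R"
    by (simp flip: power_mult add: mult.commute)
  then show ?thesis
    using bij_power_R by (auto simp: bij_def inj_def)
qed

lemma F_add_fixed:
  assumes "t ^ q = t"
  shows "F e (x + t) = F e x + t ^ R * tr3 q c"
proof -
  have L: "(x + t) ^ q - (x + t) = x ^ q - x"
    using assms by (simp add: add_power_p_power)
  have "tr3 q (t ^ R * c) = t ^ R * tr3 q c"
    using assms by (intro tr3_mult_fixed) (simp add: power_R_fixed_iff)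
  then have "tr3 q (c * (x + t) ^ R) = tr3 q (c * x ^ R) + t ^ R * tr3 q c"
    by (simp add: add_power_p_power distrib_left tr3_add mult.commute)
  then show ?thesis
    unfolding F_def L by (simp add: add.assoc)
qed

lemma not_inj_F_if_tr3_eq_0:
  assumes "tr3 q c = 0"
  shows "\<not> inj (F e)"
proof
  have "F e (0 + 1) = F e 0"
    using F_add_fixed[of 1 e 0] assms by simp
  moreover assume "inj (F e)"
  ultimately show False
    by (simp add: inj_eq)
qed

lemma exists_not_fixed_power_q: "\<exists>x :: 'a. x ^ q \<noteq> x"
proof (rule ccontr)
  assume "\<not> (\<exists>x :: 'a. x ^ q \<noteq> x)"
  then have "card (UNIV :: 'a set) \<le> q"
    using card_roots_pow_eq_pow_le[of 1 q, where 'a = 'a] q_gt_1 by simp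
  moreover have "q ^ 1 < q ^ 3"
    using power_strict_increasing_iff[OF q_gt_1, of 1 3] by simp
  ultimately show False
    by (simp add: card)
qed

lemma not_inj_F_if_root_of_unity:
  fixes z :: 'a
  assumes T: "tr3 q c \<noteq> 0" and z: "z \<noteq> 1" "z ^ q = z" "z ^ e = 1"
  shows "\<not> inj (F e)"
proof
  assume inj: "inj (F e)"
  obtain x :: 'a where x: "x ^ q \<noteq> x"
    using exists_not_fixed_power_q by blast
  define g where "g y = tr3 q (c * y ^ R)" for y
  \<comment> \<open>translating \<open>z * x\<close> by \<open>t\<close> with \<open>t ^ R = s\<close> compensates the change of the trace part\<close>
  define s where "s = (g x - g (z * x)) / tr3 q c"
  have "s ^ q = s"
    by (simp add: s_def g_def power_divide diff_power_p_power tr3_power_q)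
  obtain t where t: "s = t ^ R"
    using bij_power_R unfolding bij_def surj_def by blast
  with \<open>s ^ q = s\<close> have t_q: "t ^ q = t"
    by (simp add: power_R_fixed_iff)
  have L: "(z * x + t) ^ q - (z * x + t) = z * (x ^ q - x)"
    using z(2) t_q by (simp add: add_power_p_power power_mult_distrib algebra_simps)
  have L_z: "(z * x) ^ q - z * x = z * (x ^ q - x)"
    using z(2) by (simp add: power_mult_distrib right_diff_distrib)
  have "F e (z * x + t) = F e (z * x) + s * tr3 q c"
    using F_add_fixed[OF t_q] t by simp
  also have "\<dots> = F e x"
    unfolding F_def L_z using z(3) T by (simp add: s_def g_def power_mult_distrib)
  finally have "F e (z * x + t) = F e x" .
  then have "z * x + t = x"
    using inj by (simp add: inj_eq)
  then have "z * (x ^ q - x) = x ^ q - x"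
    using L by simp
  then show False
    using z(1) x by (simp add: mult_cancel_right1)
qed

lemma inj_F_if:
  assumes T: "tr3 q c \<noteq> 0"
    and eq_if_fixed: "\<And>y1 y2 :: 'a. tr3 q y1 = 0 \<Longrightarrow> tr3 q y2 = 0
                        \<Longrightarrow> (y1 ^ e - y2 ^ e) ^ q = y1 ^ e - y2 ^ e \<Longrightarrow> y1 = y2"
  shows "inj (F e)"
proof (rule injI)
  fix x1 x2 :: 'a
  assume eq: "F e x1 = F e x2"
  then have "(x1 ^ q - x1) ^ e - (x2 ^ q - x2) ^ e = tr3 q (c * x2 ^ R) - tr3 q (c * x1 ^ R)"
    by (simp add: F_def algebra_simps)
  then have "x1 ^ q - x1 = x2 ^ q - x2"
    by (intro eq_if_fixed[OF tr3_power_q_diff tr3_power_q_diff])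
       (simp add: diff_power_p_power tr3_power_q)
  then have t_q: "(x2 - x1) ^ q = x2 - x1"
    by (simp add: diff_power_p_power algebra_simps)
  have "F e x2 = F e x1 + (x2 - x1) ^ R * tr3 q c"
    using F_add_fixed[OF t_q, of e x1] by simp
  then have "(x2 - x1) ^ R = 0"
    using eq T by simp
  then show "x1 = x2"
    by simp
qed

lemma coprime_if_inj_F:
  assumes inj: "inj (F e)" and T: "tr3 q c \<noteq> 0"
  shows "coprime (q - 1) e"
proof (rule ccontr)
  assume "\<not> coprime (q - 1) e"
  define d where "d = gcd (q - 1) e"
  have "d \<noteq> 0"
    using q_gt_1 by (simp add: d_def)
  moreover have "d \<noteq> 1"
    using \<open>\<not> coprime (q - 1) e\<close> unfolding d_def by (metis coprime_iff_gcd_eq_1)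
  ultimately have "1 < d"
    by linarith
  have "[q = 1] (mod q - 1)"
    using q_gt_1 by (simp add: cong_altdef_nat)
  then have "[q ^ 3 = 1 ^ 3] (mod q - 1)"
    by (rule cong_pow)
  then have "q - 1 dvd card (UNIV :: 'a set) - 1"
    using q_gt_1 by (simp add: card cong_altdef_nat)
  then have "d dvd card (UNIV :: 'a set) - 1"
    unfolding d_def using dvd_trans gcd_dvd1 by blast
  then obtain z :: 'a where z: "z \<noteq> 1" "z ^ d = 1"
    using exists_nontrivial_root_of_unity \<open>1 < d\<close> by blast
  obtain r where "q - 1 = d * r"
    unfolding d_def by (rule dvdE[OF gcd_dvd1])
  moreover obtain r' where "e = d * r'"
    unfolding d_def by (rule dvdE[OF gcd_dvd2])
  ultimately have "z ^ (q - 1) = 1" "z ^ e = 1"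
    using z(2) by (simp_all add: power_mult)
  have "Suc (q - 1) = q"
    using q_gt_1 by simp
  then have "z ^ q = z * z ^ (q - 1)"
    by (metis power_Suc)
  with \<open>z ^ (q - 1) = 1\<close> have "z ^ q = z"
    by simp
  then show False
    using not_inj_F_if_root_of_unity[OF T z(1)] \<open>z ^ e = 1\<close> inj by blast
qed

theorem bij_F_iff: "bij (F (p ^ l + 1)) \<longleftrightarrow> coprime (q - 1) (p ^ l + 1) \<and> tr3 q c \<noteq> 0"
proof
  assume "bij (F (p ^ l + 1))"
  then have "inj (F (p ^ l + 1))"
    by (rule bij_is_inj)
  then show "coprime (q - 1) (p ^ l + 1) \<and> tr3 q c \<noteq> 0"
    using coprime_if_inj_F not_inj_F_if_tr3_eq_0 by blast
next
  assume H: "coprime (q - 1) (p ^ l + 1) \<and> tr3 q c \<noteq> 0"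
  then have p: "p = 2" and ord: "ord2 k \<le> ord2 l"
    using coprime_prime_power_sub_one_add_one_iff[OF prime k_pos] by blast+
  from H have T: "tr3 q c \<noteq> 0"
    by blast
  have char: "CHAR('a) = 2"
    using CHAR_eq p by simp
  have "inj (F (p ^ l + 1))"
  proof (rule inj_F_if[OF T])
    fix y1 y2 :: 'a
    assume "tr3 q y1 = 0" "tr3 q y2 = 0"
      and "(y1 ^ (p ^ l + 1) - y2 ^ (p ^ l + 1)) ^ q = y1 ^ (p ^ l + 1) - y2 ^ (p ^ l + 1)"
    then show "y1 = y2"
      unfolding p by (rule trace_zero_eq_if_power_diff_fixed[OF char k_pos ord])
  qed
  then show "bij (F (p ^ l + 1))"
    by (simp add: bij_def finite_UNIV_inj_surj)
qed

end

theorem theorem1p4: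
  fixes p k l m :: nat and c :: "'a::{finite, field}"
  assumes "prime p" and "k > 0" and "card (UNIV :: 'a set) = (p ^ k) ^ 3"
  defines "q \<equiv> p ^ k" and "Q \<equiv> p ^ l" and "R \<equiv> p ^ m"
  defines "f \<equiv> (\<lambda>x::'a. (x ^ q - x) ^ (Q + 1) + c ^ (q ^ 2) * x ^ (q ^ 2 * R)
                       + c ^ q * x ^ (q * R) + c * x ^ R)"
  shows "(bij f \<longleftrightarrow> gcd (q - 1) (Q + 1) = 1 \<and> tr3 q c \<noteq> 0)
       \<and> (bij f \<longleftrightarrow> p = 2 \<and> ord2 k \<le> ord2 l \<and> tr3 q c \<noteq> 0)"
proof -
  interpret T: cubic_trace_map p k m c
    using assms by unfold_locales
  have power_R_power: "(x ^ R) ^ n = x ^ (n * R)" for x :: 'a and n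
    by (metis power_mult mult.commute)
  have "f = T.F (Q + 1)"
    unfolding fun_eq_iff f_def T.F_def tr3_def
    by (simp add: power_mult_distrib power_R_power[unfolded R_def] q_def R_def add.assoc)
  then have "bij f \<longleftrightarrow> coprime (q - 1) (Q + 1) \<and> tr3 q c \<noteq> 0"
    using T.bij_F_iff[of l] by (simp add: q_def Q_def)
  moreover have "coprime (q - 1) (Q + 1) \<longleftrightarrow> p = 2 \<and> ord2 k \<le> ord2 l"
    unfolding q_def Q_def by (rule coprime_prime_power_sub_one_add_one_iff[OF assms(1,2)])
  ultimately show ?thesis
    by (metis coprime_iff_gcd_eq_1)
qed

end
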